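(* Let $m\ge1$ and $[m]=\{1<2<\dots<m\}$. For every poset ideal $\mathcal{J}\subseteq\mathrm{Hom}([m],\mathbb{N})$ the projected letterplace ideal $L^{p_1}(\mathcal{J},[m])$ is a strongly stable ideal of $k[x_1,\dots,x_m]$, and $\mathcal{J}\mapsto L^{p_1}(\mathcal{J},[m])$ is a one-to-one correspondence between poset ideals of $\mathrm{Hom}([m],\mathbb{N})$ and strongly stable ideals of $k[x_1,\dots,x_m]$.
   Context: $\mathbb{N}=\{0,1,2,\dots\}$; $\mathrm{Hom}([m],\mathbb{N})$ is the set of weakly increasing maps $[m]\to\mathbb{N}$ ordered pointwise; $\mathcal{J}^c$ denotes the complement of $\mathcal{J}$. The ascent of $\psi$ is $\Lambda\psi=\{(a,i)\in[m]\times\mathbb{N}:\psi(q)\le i<\psi(a)\ \forall q<a\}$. $k$ is a field; the letterplace ideal $L(\mathcal{J},[m])\subseteq k[x_{a,i}:(a,i)\in[m]\times\mathbb{N}]$ is generated by $\prod_{(a,i)\in\Lambda\psi}x_{a,i}$ for $\psi\in\mathcal{J}^c$. $L^{p_1}(\mathcal{J},[m])$ is the ideal of $k[x_1,\dots,x_m]$ generated by the images of these generators under $x_{a,i}\mapsto x_a$. A monomial ideal $I$ is strongly stable if for every monomial $u$ and $i<j$, $x_ju\in I$ implies $x_iu\in I$. *)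

theory Defs
  imports "HOL-Library.Poly_Mapping"
begin

text \<open>The ring k[x_1,...,x_m] is the subring of
  polynomials all of whose monomials only involve variables 1..m.\<close>

type_synonym 'k mpoly = "(nat \<Rightarrow>\<^sub>0 nat) \<Rightarrow>\<^sub>0 'k"

definition monoms :: "nat \<Rightarrow> (nat \<Rightarrow>\<^sub>0 nat) set" where
  "monoms m = {e. Poly_Mapping.keys e \<subseteq> {1..m}}"

definition Pring :: "nat \<Rightarrow> ('k::comm_ring_1) mpoly set" where
  "Pring m = {p. \<forall>e\<in>Poly_Mapping.keys p. e \<in> monoms m}"

definition mono :: "(nat \<Rightarrow>\<^sub>0 nat) \<Rightarrow> ('k::comm_ring_1) mpoly" where
  "mono e = Poly_Mapping.single e 1"

definition var :: "nat \<Rightarrow> ('k::comm_ring_1) mpoly" where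
  "var a = mono (Poly_Mapping.single a 1)"

definition is_ideal :: "nat \<Rightarrow> ('k::comm_ring_1) mpoly set \<Rightarrow> bool" where
  "is_ideal m I \<longleftrightarrow> I \<subseteq> Pring m \<and> 0 \<in> I \<and> (\<forall>p\<in>I. \<forall>q\<in>I. p + q \<in> I)
     \<and> (\<forall>r\<in>Pring m. \<forall>p\<in>I. r * p \<in> I)"

definition gen_ideal :: "nat \<Rightarrow> ('k::comm_ring_1) mpoly set \<Rightarrow> 'k mpoly set" where
  "gen_ideal m G = \<Inter>{I. is_ideal m I \<and> G \<subseteq> I}"

definition monomial_ideal :: "nat \<Rightarrow> ('k::comm_ring_1) mpoly set \<Rightarrow> bool" where
  "monomial_ideal m I \<longleftrightarrow> is_ideal m I \<and> (\<exists>E \<subseteq> monoms m. I = gen_ideal m (mono ` E))"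

definition strongly_stable :: "nat \<Rightarrow> ('k::comm_ring_1) mpoly set \<Rightarrow> bool" where
  "strongly_stable m I \<longleftrightarrow> monomial_ideal m I \<and>
     (\<forall>u\<in>monoms m. \<forall>i j. 1 \<le> i \<and> i < j \<and> j \<le> m \<longrightarrow>
        var j * mono u \<in> I \<longrightarrow> var i * mono u \<in> I)"

definition Hom :: "nat \<Rightarrow> (nat \<Rightarrow> nat) set" where
  "Hom m = {\<psi>. (\<forall>a b. 1 \<le> a \<and> a \<le> b \<and> b \<le> m \<longrightarrow> \<psi> a \<le> \<psi> b) \<and>
                (\<forall>a. a \<notin> {1..m} \<longrightarrow> \<psi> a = 0)}"

definition poset_ideal :: "nat \<Rightarrow> (nat \<Rightarrow> nat) set \<Rightarrow> bool" where
  "poset_ideal m J \<longleftrightarrow> J \<subseteq> Hom m \<and>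
     (\<forall>\<phi>\<in>J. \<forall>\<psi>\<in>Hom m. (\<forall>a\<in>{1..m}. \<psi> a \<le> \<phi> a) \<longrightarrow> \<psi> \<in> J)"

definition ascent :: "nat \<Rightarrow> (nat \<Rightarrow> nat) \<Rightarrow> (nat \<times> nat) set" where
  "ascent m \<psi> = {(a, i). a \<in> {1..m} \<and> (\<forall>q. 1 \<le> q \<and> q < a \<longrightarrow> \<psi> q \<le> i) \<and> i < \<psi> a}"

text \<open>Image of the letterplace generator prod_{(a,i) in ascent} x_{a,i} under x_{a,i} to x_a.\<close>

definition proj_gen :: "nat \<Rightarrow> (nat \<Rightarrow> nat) \<Rightarrow> ('k::comm_ring_1) mpoly" where
  "proj_gen m \<psi> = (\<Prod>(a, i)\<in>ascent m \<psi>. var a)"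

definition Lp1 :: "nat \<Rightarrow> (nat \<Rightarrow> nat) set \<Rightarrow> ('k::comm_ring_1) mpoly set" where
  "Lp1 m J = gen_ideal m (proj_gen m ` (Hom m - J))"

end

theory Submission
  imports Defs
begin

text \<open>A weakly increasing \<open>\<psi>\<close> is encoded by the monomial whose exponent of \<open>x\<^sub>a\<close> is the jump
  \<open>\<psi> a - \<psi> (a - 1)\<close>; this is exactly the projected letterplace generator of \<open>\<psi>\<close>, and taking
  partial sums inverts it, so \<open>Hom([m],\<nat>)\<close> is in bijection with the monomials of
  \<open>k[x\<^sub>1,\<dots>,x\<^sub>m]\<close>. Divisibility of monomials implies the pointwise order of the partial sums,
  hence a monomial lies in \<open>L\<^sup>p\<^sup>1(J,[m])\<close> iff its partial sum function lies outside \<open>J\<close>.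
  The pointwise order on \<open>Hom([m],\<nat>)\<close> is generated by raising \<open>\<psi> m\<close> (multiplying by \<open>x\<^sub>m\<close>)
  and raising \<open>\<psi> b\<close> for \<open>b < m\<close> (replacing \<open>x\<^sub>b\<^sub>+\<^sub>1\<close> by \<open>x\<^sub>b\<close>). So complements of
  poset ideals correspond exactly to the monomial sets of strongly stable ideals.\<close>

lemma mono_mult: "(mono a :: 'k::comm_ring_1 mpoly) * mono b = mono (a + b)"
  by (simp add: mono_def mult_single)

lemma var_mult_mono: "(var j :: 'k::comm_ring_1 mpoly) * mono u = mono (Poly_Mapping.single j 1 + u)"
  by (simp add: var_def mono_mult)

lemma keys_add_nat:
  "Poly_Mapping.keys (a + b :: 'a \<Rightarrow>\<^sub>0 nat) = Poly_Mapping.keys a \<union> Poly_Mapping.keys b"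
  by (auto simp: in_keys_iff lookup_add)

lemma monoms_add_iff: "a + b \<in> monoms m \<longleftrightarrow> a \<in> monoms m \<and> b \<in> monoms m"
  by (simp add: monoms_def keys_add_nat)

lemma single_in_monoms: "i \<in> {1..m} \<Longrightarrow> Poly_Mapping.single i n \<in> monoms m"
  by (simp add: monoms_def)

lemma Pring_add: "p \<in> Pring m \<Longrightarrow> q \<in> Pring m \<Longrightarrow> p + q \<in> Pring m"
  using keys_add[of p q] unfolding Pring_def mem_Collect_eq by blast

lemma Pring_mult:
  assumes "p \<in> Pring m" and "q \<in> Pring m"
  shows "p * q \<in> Pring m"
  unfolding Pring_def mem_Collect_eq
proof
  fix k assume "k \<in> Poly_Mapping.keys (p * q)"
  then obtain a b where "k = a + b" "a \<in> Poly_Mapping.keys p" "b \<in> Poly_Mapping.keys q"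
    using keys_mult by blast
  with assms show "k \<in> monoms m" by (simp add: Pring_def monoms_add_iff)
qed

lemma keys_mono [simp]: "Poly_Mapping.keys (mono e :: 'k::comm_ring_1 mpoly) = {e}"
  by (simp add: mono_def)

lemma mono_in_Pring: "e \<in> monoms m \<Longrightarrow> (mono e :: 'k::comm_ring_1 mpoly) \<in> Pring m"
  by (simp add: Pring_def)

lemma const_in_Pring: "(Poly_Mapping.single 0 c :: 'k::comm_ring_1 mpoly) \<in> Pring m"
  by (simp add: Pring_def monoms_def)

lemma zero_in_Pring [simp]: "0 \<in> Pring m"
  by (simp add: Pring_def)

lemma is_ideal_Pring: "is_ideal m (Pring m)"
  by (simp add: is_ideal_def Pring_add Pring_mult)

lemma is_ideal_gen_ideal:
  assumes "G \<subseteq> Pring m"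
  shows "is_ideal m (gen_ideal m G)"
proof -
  have "Pring m \<in> {I. is_ideal m I \<and> G \<subseteq> I}" using assms is_ideal_Pring by blast
  then have "gen_ideal m G \<subseteq> Pring m" unfolding gen_ideal_def by blast
  moreover have "0 \<in> gen_ideal m G"
    and "\<forall>p\<in>gen_ideal m G. \<forall>q\<in>gen_ideal m G. p + q \<in> gen_ideal m G"
    and "\<forall>r\<in>Pring m. \<forall>p\<in>gen_ideal m G. r * p \<in> gen_ideal m G"
    unfolding gen_ideal_def is_ideal_def by blast+
  ultimately show ?thesis unfolding is_ideal_def by blast
qed

lemma gen_ideal_superset: "G \<subseteq> gen_ideal m G"
  by (auto simp: gen_ideal_def)

lemma gen_ideal_least: "is_ideal m I \<Longrightarrow> G \<subseteq> I \<Longrightarrow> gen_ideal m G \<subseteq> I"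
  by (auto simp: gen_ideal_def)

lemma is_ideal_sum: "finite A \<Longrightarrow> is_ideal m I \<Longrightarrow> (\<And>a. a \<in> A \<Longrightarrow> f a \<in> I) \<Longrightarrow> sum f A \<in> I"
  by (induction A rule: finite_induct) (auto simp: is_ideal_def)

definition monomial_multiples :: "nat \<Rightarrow> (nat \<Rightarrow>\<^sub>0 nat) set \<Rightarrow> ('k::comm_ring_1) mpoly set" where
  "monomial_multiples m E = {p \<in> Pring m. \<forall>k\<in>Poly_Mapping.keys p. \<exists>e\<in>E. \<exists>d. k = d + e}"

lemma is_ideal_monomial_multiples: "is_ideal m (monomial_multiples m E :: 'k::comm_ring_1 mpoly set)"
  unfolding is_ideal_def
proof (intro conjI ballI)
  show "monomial_multiples m E \<subseteq> Pring m" "0 \<in> monomial_multiples m E"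
    by (auto simp: monomial_multiples_def Pring_def)
next
  fix p q :: "'k mpoly" assume p: "p \<in> monomial_multiples m E" and q: "q \<in> monomial_multiples m E"
  then have "p + q \<in> Pring m" by (simp add: monomial_multiples_def Pring_add)
  moreover have "Poly_Mapping.keys (p + q) \<subseteq> Poly_Mapping.keys p \<union> Poly_Mapping.keys q"
    by (rule keys_add)
  ultimately show "p + q \<in> monomial_multiples m E"
    using p q unfolding monomial_multiples_def by blast
next
  fix r p :: "'k mpoly" assume r: "r \<in> Pring m" and p: "p \<in> monomial_multiples m E"
  have "\<exists>e\<in>E. \<exists>d. k = d + e" if k_key: "k \<in> Poly_Mapping.keys (r * p)" for k
  proof -
    obtain a b where k: "k = a + b" and "b \<in> Poly_Mapping.keys p"
      using keys_mult[of r p] k_key by blast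
    then obtain e d where "e \<in> E" "b = d + e" using p by (auto simp: monomial_multiples_def)
    with k show ?thesis by (metis add.assoc)
  qed
  moreover have "r * p \<in> Pring m" using r p by (auto simp: monomial_multiples_def intro: Pring_mult)
  ultimately show "r * p \<in> monomial_multiples m E" by (simp add: monomial_multiples_def)
qed

lemma gen_ideal_subset_monomial_multiples:
  "E \<subseteq> monoms m \<Longrightarrow> gen_ideal m (mono ` E) \<subseteq> (monomial_multiples m E :: 'k::comm_ring_1 mpoly set)"
  by (rule gen_ideal_least[OF is_ideal_monomial_multiples])
    (auto simp: monomial_multiples_def mono_in_Pring intro!: exI[of _ 0])

lemma sum_single_keys: "(\<Sum>k\<in>Poly_Mapping.keys p. Poly_Mapping.single k (Poly_Mapping.lookup p k)) = p"
proof -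
  have "finite A \<Longrightarrow> Poly_Mapping.lookup (\<Sum>k\<in>A. Poly_Mapping.single k (Poly_Mapping.lookup p k)) j =
          (if j \<in> A then Poly_Mapping.lookup p j else 0)" for A j
    by (induction A rule: finite_induct) (auto simp: lookup_single lookup_add when_def)
  then show ?thesis
    by (intro poly_mapping_eqI) (simp add: in_keys_iff)
qed

lemma ideal_memI_monos:
  assumes I: "is_ideal m I" and p: "p \<in> Pring m"
    and mono_mem: "\<And>k. k \<in> Poly_Mapping.keys p \<Longrightarrow> (mono k :: 'k::comm_ring_1 mpoly) \<in> I"
  shows "p \<in> I"
proof -
  have "Poly_Mapping.single k (Poly_Mapping.lookup p k) \<in> I" if "k \<in> Poly_Mapping.keys p" for k
  proof -
    have "Poly_Mapping.single 0 (Poly_Mapping.lookup p k) * mono k \<in> I"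
      using I mono_mem[OF that] const_in_Pring unfolding is_ideal_def by blast
    then show ?thesis by (simp add: mono_def mult_single)
  qed
  then have "(\<Sum>k\<in>Poly_Mapping.keys p. Poly_Mapping.single k (Poly_Mapping.lookup p k)) \<in> I"
    by (intro is_ideal_sum[OF _ I]) auto
  then show ?thesis by (simp only: sum_single_keys)
qed

lemma monomial_ideal_mono_keys:
  assumes I: "monomial_ideal m I" and p: "p \<in> I" and k: "k \<in> Poly_Mapping.keys p"
  shows "(mono k :: 'k::comm_ring_1 mpoly) \<in> I"
proof -
  obtain E where E: "E \<subseteq> monoms m" "I = gen_ideal m (mono ` E)" and id: "is_ideal m I"
    using I by (auto simp: monomial_ideal_def)
  have "p \<in> monomial_multiples m E" using gen_ideal_subset_monomial_multiples[OF E(1)] E(2) p by blast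
  then obtain e d where ed: "e \<in> E" "k = d + e" and "p \<in> Pring m"
    using k by (auto simp: monomial_multiples_def)
  then have "d \<in> monoms m" using k by (auto simp: Pring_def monoms_add_iff)
  moreover have "mono e \<in> I" using E ed gen_ideal_superset by blast
  ultimately have "mono d * mono e \<in> I" using id mono_in_Pring unfolding is_ideal_def by blast
  then show ?thesis by (simp add: mono_mult ed)
qed

lemma monomial_ideal_subsetI:
  assumes I: "monomial_ideal m I" and I': "monomial_ideal m I'"
    and mono_mem: "\<And>v. v \<in> monoms m \<Longrightarrow> (mono v :: 'k::comm_ring_1 mpoly) \<in> I \<Longrightarrow> mono v \<in> I'"
  shows "I \<subseteq> I'"
proof
  fix p assume p: "p \<in> I"
  have pP: "p \<in> Pring m" using I p by (auto simp: monomial_ideal_def is_ideal_def)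
  show "p \<in> I'"
  proof (rule ideal_memI_monos)
    show "is_ideal m I'" using I' by (simp add: monomial_ideal_def)
    show "p \<in> Pring m" by (fact pP)
    fix k assume "k \<in> Poly_Mapping.keys p"
    with pP monomial_ideal_mono_keys[OF I p] show "mono k \<in> I'"
      by (intro mono_mem) (auto simp: Pring_def)
  qed
qed

lemma monomial_ideal_eqI:
  assumes "monomial_ideal m I" and "monomial_ideal m I'"
    and "\<And>v. v \<in> monoms m \<Longrightarrow> (mono v :: 'k::comm_ring_1 mpoly) \<in> I \<longleftrightarrow> mono v \<in> I'"
  shows "I = I'"
proof
  show "I \<subseteq> I'" by (rule monomial_ideal_subsetI[OF assms(1,2)]) (simp add: assms(3))
  show "I' \<subseteq> I" by (rule monomial_ideal_subsetI[OF assms(2,1)]) (simp add: assms(3))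
qed

definition hom_exp :: "nat \<Rightarrow> (nat \<Rightarrow> nat) \<Rightarrow> (nat \<Rightarrow>\<^sub>0 nat)" where
  "hom_exp m \<psi> = (\<Sum>x\<in>ascent m \<psi>. Poly_Mapping.single (fst x) 1)"

definition partial_sums :: "nat \<Rightarrow> (nat \<Rightarrow>\<^sub>0 nat) \<Rightarrow> nat \<Rightarrow> nat" where
  "partial_sums m v = (\<lambda>a. if a \<in> {1..m} then \<Sum>b=1..a. Poly_Mapping.lookup v b else 0)"

lemma finite_ascent: "finite (ascent m \<psi>)"
proof (rule finite_subset)
  show "ascent m \<psi> \<subseteq> (SIGMA a:{1..m}. {..<\<psi> a})" by (auto simp: ascent_def)
qed auto

lemma prod_var_eq_mono:
  "finite S \<Longrightarrow> (\<Prod>x\<in>S. (var (f x) :: 'k::comm_ring_1 mpoly)) = mono (\<Sum>x\<in>S. Poly_Mapping.single (f x) 1)"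
proof (induction S rule: finite_induct)
  case empty
  then show ?case by (simp add: mono_def)
next
  case (insert x F)
  then show ?case by (simp add: var_mult_mono)
qed

lemma proj_gen_eq_mono: "(proj_gen m \<psi> :: 'k::comm_ring_1 mpoly) = mono (hom_exp m \<psi>)"
  unfolding proj_gen_def hom_exp_def case_prod_beta by (rule prod_var_eq_mono[OF finite_ascent])

lemma Hom_outside: "\<psi> \<in> Hom m \<Longrightarrow> a \<notin> {1..m} \<Longrightarrow> \<psi> a = 0"
  by (simp add: Hom_def)

lemma Hom_mono: "\<psi> \<in> Hom m \<Longrightarrow> a \<le> b \<Longrightarrow> b \<le> m \<Longrightarrow> \<psi> a \<le> \<psi> b"
  by (cases "a = 0") (auto simp: Hom_def)

lemma Hom_eqI:
  assumes "\<psi> \<in> Hom m" "\<phi> \<in> Hom m" and eq: "\<And>a. a \<in> {1..m} \<Longrightarrow> \<psi> a = \<phi> a"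
  shows "\<psi> = \<phi>"
proof
  fix a show "\<psi> a = \<phi> a"
    using eq Hom_outside[OF assms(1)] Hom_outside[OF assms(2)] by (cases "a \<in> {1..m}") auto
qed

lemma ascent_fibre:
  assumes "\<psi> \<in> Hom m" and "b \<in> {1..m}"
  shows "{x \<in> ascent m \<psi>. fst x = b} = {b} \<times> {\<psi> (b - 1)..<\<psi> b}"
proof -
  have below_iff: "(\<forall>q. 1 \<le> q \<and> q < b \<longrightarrow> \<psi> q \<le> i) \<longleftrightarrow> \<psi> (b - 1) \<le> i" for i
  proof
    assume below: "\<forall>q. 1 \<le> q \<and> q < b \<longrightarrow> \<psi> q \<le> i"
    show "\<psi> (b - 1) \<le> i"
    proof (cases "b = 1")
      case True
      then show ?thesis using Hom_outside[OF assms(1), of 0] by simp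
    next
      case False
      then show ?thesis using below[rule_format, of "b - 1"] assms(2) by auto
    qed
  next
    assume "\<psi> (b - 1) \<le> i"
    moreover have "\<psi> q \<le> \<psi> (b - 1)" if "q < b" for q
      using Hom_mono[OF assms(1), of q "b - 1"] that assms(2) by simp
    ultimately show "\<forall>q. 1 \<le> q \<and> q < b \<longrightarrow> \<psi> q \<le> i"
      using order_trans by blast
  qed
  show ?thesis
  proof (rule set_eqI)
    fix x :: "nat \<times> nat"
    show "x \<in> {x \<in> ascent m \<psi>. fst x = b} \<longleftrightarrow> x \<in> {b} \<times> {\<psi> (b - 1)..<\<psi> b}"
      using assms(2) below_iff[of "snd x"] by (cases x) (auto simp: ascent_def)
  qed
qed

lemma lookup_hom_exp:
  assumes "\<psi> \<in> Hom m"
  shows "Poly_Mapping.lookup (hom_exp m \<psi>) b = (if b \<in> {1..m} then \<psi> b - \<psi> (b - 1) else 0)"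
proof -
  have "Poly_Mapping.lookup (hom_exp m \<psi>) b = (\<Sum>x\<in>ascent m \<psi>. if fst x = b then 1 else 0)"
    unfolding hom_exp_def lookup_sum lookup_single when_def by (rule sum.cong) auto
  also have "\<dots> = card {x \<in> ascent m \<psi>. fst x = b}"
    using sum.inter_filter[OF finite_ascent, of "\<lambda>_. 1::nat" m \<psi> "\<lambda>x. fst x = b"] by simp
  finally have lookup_card: "Poly_Mapping.lookup (hom_exp m \<psi>) b = card {x \<in> ascent m \<psi>. fst x = b}" .
  show ?thesis
  proof (cases "b \<in> {1..m}")
    case True
    then show ?thesis unfolding lookup_card ascent_fibre[OF assms True] by simp
  next
    case False
    then have "{x \<in> ascent m \<psi>. fst x = b} = {}" by (auto simp: ascent_def)
    with False show ?thesis unfolding lookup_card by (simp only: card.empty if_False)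
  qed
qed

lemma hom_exp_in_monoms: "hom_exp m \<psi> \<in> monoms m"
proof -
  have "Poly_Mapping.keys (Poly_Mapping.single (fst x) 1 :: nat \<Rightarrow>\<^sub>0 nat) \<subseteq> {1..m}"
    if "x \<in> ascent m \<psi>" for x
    using that by (auto simp: ascent_def)
  then show ?thesis
    unfolding monoms_def hom_exp_def using keys_sum by fastforce
qed

lemma partial_sums_in_Hom: "partial_sums m v \<in> Hom m"
  unfolding Hom_def partial_sums_def by (auto intro!: sum_mono2)

lemma partial_sums_hom_exp:
  assumes "\<psi> \<in> Hom m"
  shows "partial_sums m (hom_exp m \<psi>) = \<psi>"
proof (rule Hom_eqI[OF partial_sums_in_Hom assms])
  have "a \<le> m \<Longrightarrow> (\<Sum>b=1..a. Poly_Mapping.lookup (hom_exp m \<psi>) b) = \<psi> a" for a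
  proof (induction a)
    case 0
    then show ?case using Hom_outside[OF assms, of 0] by simp
  next
    case (Suc a)
    then have "\<psi> a \<le> \<psi> (Suc a)" using Hom_mono[OF assms, of a "Suc a"] by simp
    with Suc show ?case by (simp add: lookup_hom_exp[OF assms])
  qed
  then show "a \<in> {1..m} \<Longrightarrow> partial_sums m (hom_exp m \<psi>) a = \<psi> a" for a
    by (simp add: partial_sums_def)
qed

lemma hom_exp_partial_sums:
  assumes "v \<in> monoms m"
  shows "hom_exp m (partial_sums m v) = v"
proof (rule poly_mapping_eqI)
  fix b
  show "Poly_Mapping.lookup (hom_exp m (partial_sums m v)) b = Poly_Mapping.lookup v b"
  proof (cases "b \<in> {1..m}")
    case b: True
    show ?thesis
    proof (cases "b = 1")
      case True
      with b show ?thesis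
        unfolding lookup_hom_exp[OF partial_sums_in_Hom] by (simp add: partial_sums_def)
    next
      case False
      define c where "c = b - 1"
      with b False have "b = Suc c" "1 \<le> c" by auto
      with b show ?thesis
        unfolding lookup_hom_exp[OF partial_sums_in_Hom] by (simp add: partial_sums_def)
    qed
  next
    case False
    then have "b \<notin> Poly_Mapping.keys v" using assms by (auto simp: monoms_def)
    then show ?thesis
      unfolding lookup_hom_exp[OF partial_sums_in_Hom] if_not_P[OF False] by (simp add: in_keys_iff)
  qed
qed

lemma partial_sums_le:
  "(\<And>b. Poly_Mapping.lookup u b \<le> Poly_Mapping.lookup v b) \<Longrightarrow> partial_sums m u a \<le> partial_sums m v a"
  by (auto simp: partial_sums_def intro!: sum_mono)

lemma partial_sums_add_single:
  "partial_sums m (Poly_Mapping.single i 1 + u) a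
     = partial_sums m u a + (if a \<in> {1..m} \<and> 1 \<le> i \<and> i \<le> a then 1 else 0)"
  by (auto simp: partial_sums_def lookup_add sum.distrib lookup_single when_def)

lemma Lp1_eq_gen_ideal_monos:
  "(Lp1 m J :: 'k::comm_ring_1 mpoly set) = gen_ideal m (mono ` hom_exp m ` (Hom m - J))"
  by (simp add: Lp1_def proj_gen_eq_mono image_image)

lemma monomial_ideal_Lp1: "monomial_ideal m (Lp1 m J :: 'k::comm_ring_1 mpoly set)"
proof -
  have E: "hom_exp m ` (Hom m - J) \<subseteq> monoms m" using hom_exp_in_monoms by blast
  then have "mono ` hom_exp m ` (Hom m - J) \<subseteq> (Pring m :: 'k mpoly set)"
    using mono_in_Pring by blast
  then have "is_ideal m (Lp1 m J :: 'k mpoly set)"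
    unfolding Lp1_eq_gen_ideal_monos by (rule is_ideal_gen_ideal)
  with E show ?thesis unfolding monomial_ideal_def Lp1_eq_gen_ideal_monos by blast
qed

text \<open>Divisibility of monomials turns into the pointwise order on partial sums, so membership
  of a monomial is decided by a single generator.\<close>

lemma mono_in_Lp1_iff:
  assumes J: "poset_ideal m J" and v: "v \<in> monoms m"
  shows "(mono v :: 'k::comm_ring_1 mpoly) \<in> Lp1 m J \<longleftrightarrow> partial_sums m v \<notin> J"
proof
  assume "partial_sums m v \<notin> J"
  then have "partial_sums m v \<in> Hom m - J" using partial_sums_in_Hom by blast
  then have "(mono (hom_exp m (partial_sums m v)) :: 'k mpoly) \<in> mono ` hom_exp m ` (Hom m - J)"
    by (intro imageI)
  then have "(mono v :: 'k mpoly) \<in> mono ` hom_exp m ` (Hom m - J)"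
    by (simp only: hom_exp_partial_sums[OF v])
  then show "(mono v :: 'k mpoly) \<in> Lp1 m J"
    unfolding Lp1_eq_gen_ideal_monos by (rule subsetD[OF gen_ideal_superset])
next
  assume "(mono v :: 'k mpoly) \<in> Lp1 m J"
  moreover have "hom_exp m ` (Hom m - J) \<subseteq> monoms m" using hom_exp_in_monoms by blast
  ultimately have "(mono v :: 'k mpoly) \<in> monomial_multiples m (hom_exp m ` (Hom m - J))"
    unfolding Lp1_eq_gen_ideal_monos using gen_ideal_subset_monomial_multiples by blast
  then have "\<exists>e\<in>hom_exp m ` (Hom m - J). \<exists>d. v = d + e"
    by (simp add: monomial_multiples_def)
  then obtain \<phi> d where \<phi>: "\<phi> \<in> Hom m - J" and "v = d + hom_exp m \<phi>"
    by blast
  then have "partial_sums m (hom_exp m \<phi>) a \<le> partial_sums m v a" for a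
    by (intro partial_sums_le) (simp add: lookup_add)
  then have "\<forall>a\<in>{1..m}. \<phi> a \<le> partial_sums m v a"
    using partial_sums_hom_exp[of \<phi> m] \<phi> by simp
  then show "partial_sums m v \<notin> J"
    using J \<phi> partial_sums_in_Hom[of m v] unfolding poset_ideal_def by blast
qed

lemma strongly_stable_Lp1:
  assumes J: "poset_ideal m J"
  shows "strongly_stable m (Lp1 m J :: 'k::comm_ring_1 mpoly set)"
  unfolding strongly_stable_def
proof (intro conjI ballI allI impI)
  show "monomial_ideal m (Lp1 m J :: 'k mpoly set)" by (rule monomial_ideal_Lp1)
next
  fix u i j assume u: "u \<in> monoms m" and ij: "1 \<le> i \<and> i < j \<and> j \<le> m"
    and "(var j :: 'k mpoly) * mono u \<in> Lp1 m J"
  let ?\<psi>\<^sub>i = "partial_sums m (Poly_Mapping.single i 1 + u)"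
  let ?\<psi>\<^sub>j = "partial_sums m (Poly_Mapping.single j 1 + u)"
  have in_monoms: "Poly_Mapping.single i 1 + u \<in> monoms m" "Poly_Mapping.single j 1 + u \<in> monoms m"
    using u ij by (simp_all add: monoms_add_iff single_in_monoms)
  have "?\<psi>\<^sub>j \<notin> J"
    using \<open>var j * mono u \<in> _\<close> mono_in_Lp1_iff[OF J in_monoms(2), where 'k='k] by (simp add: var_mult_mono)
  moreover have "?\<psi>\<^sub>j a \<le> ?\<psi>\<^sub>i a" for a
    using ij unfolding partial_sums_add_single by auto
  ultimately have "?\<psi>\<^sub>i \<notin> J"
    using J partial_sums_in_Hom[of m "Poly_Mapping.single j 1 + u"] unfolding poset_ideal_def by blast
  then show "(var i :: 'k mpoly) * mono u \<in> Lp1 m J"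
    using mono_in_Lp1_iff[OF J in_monoms(1), where 'k='k] by (simp add: var_mult_mono)
qed

lemma hom_exp_raise_last:
  assumes \<psi>: "\<psi> \<in> Hom m" and \<psi>': "\<psi>(m := Suc (\<psi> m)) \<in> Hom m" and "1 \<le> m"
  shows "hom_exp m (\<psi>(m := Suc (\<psi> m))) = Poly_Mapping.single m 1 + hom_exp m \<psi>"
proof (rule poly_mapping_eqI)
  fix c
  have "\<psi> (m - 1) \<le> \<psi> m" by (rule Hom_mono[OF \<psi>]) auto
  with \<open>1 \<le> m\<close> show "Poly_Mapping.lookup (hom_exp m (\<psi>(m := Suc (\<psi> m)))) c
      = Poly_Mapping.lookup (Poly_Mapping.single m 1 + hom_exp m \<psi>) c"
    unfolding lookup_hom_exp[OF \<psi>'] lookup_hom_exp[OF \<psi>] lookup_add lookup_single when_def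
    by auto
qed

lemma hom_exp_raise_exchange:
  assumes \<psi>: "\<psi> \<in> Hom m" and \<psi>': "\<psi>(b := Suc (\<psi> b)) \<in> Hom m" and b: "b \<in> {1..<m}"
  obtains u where "hom_exp m \<psi> = Poly_Mapping.single (Suc b) 1 + u"
    and "hom_exp m (\<psi>(b := Suc (\<psi> b))) = Poly_Mapping.single b 1 + u"
proof
  let ?u = "hom_exp m \<psi> - Poly_Mapping.single (Suc b) 1"
  have "\<psi> b < \<psi> (Suc b)" using Hom_mono[OF \<psi>', of b "Suc b"] b by simp
  moreover have "\<psi> (b - 1) \<le> \<psi> b" by (rule Hom_mono[OF \<psi>]) (use b in auto)
  ultimately show "hom_exp m \<psi> = Poly_Mapping.single (Suc b) 1 + ?u"
    and "hom_exp m (\<psi>(b := Suc (\<psi> b))) = Poly_Mapping.single b 1 + ?u"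
    using b by (auto intro!: poly_mapping_eqI simp: lookup_add lookup_minus lookup_single when_def
        lookup_hom_exp[OF \<psi>] lookup_hom_exp[OF \<psi>'])
qed

lemma strongly_stableD:
  "strongly_stable m I \<Longrightarrow> u \<in> monoms m \<Longrightarrow> 1 \<le> i \<Longrightarrow> i < j \<Longrightarrow> j \<le> m
    \<Longrightarrow> var j * mono u \<in> I \<Longrightarrow> var i * mono u \<in> I"
  unfolding strongly_stable_def by blast

lemma strongly_stable_raise:
  assumes ss: "strongly_stable m (I :: 'k::comm_ring_1 mpoly set)" and \<psi>: "\<psi> \<in> Hom m"
    and b: "b \<in> {1..m}" and \<psi>': "\<psi>(b := Suc (\<psi> b)) \<in> Hom m"
    and "mono (hom_exp m \<psi>) \<in> I"
  shows "mono (hom_exp m (\<psi>(b := Suc (\<psi> b)))) \<in> I"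
proof (cases "b = m")
  case True
  have "(var m :: 'k mpoly) \<in> Pring m"
    unfolding var_def using b by (intro mono_in_Pring single_in_monoms) auto
  with ss \<open>mono (hom_exp m \<psi>) \<in> I\<close> have "var m * mono (hom_exp m \<psi>) \<in> I"
    unfolding strongly_stable_def monomial_ideal_def is_ideal_def by blast
  with True b \<psi> \<psi>' show ?thesis by (simp add: hom_exp_raise_last var_mult_mono)
next
  case False
  with b have b': "b \<in> {1..<m}" by simp
  obtain u where u: "hom_exp m \<psi> = Poly_Mapping.single (Suc b) 1 + u"
    and u': "hom_exp m (\<psi>(b := Suc (\<psi> b))) = Poly_Mapping.single b 1 + u"
    using hom_exp_raise_exchange[OF \<psi> \<psi>' b'] .
  have "u \<in> monoms m" using hom_exp_in_monoms[of m \<psi>] unfolding u monoms_add_iff by blast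
  moreover have "var (Suc b) * mono u \<in> I"
    using \<open>mono (hom_exp m \<psi>) \<in> I\<close> by (simp add: u var_mult_mono)
  ultimately have "var b * mono u \<in> I"
    using strongly_stableD[OF ss, of u b "Suc b"] b' by simp
  then show ?thesis by (simp add: u' var_mult_mono)
qed

text \<open>Take \<open>b\<close> maximal with \<open>\<psi> b < \<phi> b\<close>: above \<open>b\<close> the two maps agree, so
  \<open>\<psi> b < \<phi> b \<le> \<phi> (b + 1) = \<psi> (b + 1)\<close> and raising \<open>\<psi> b\<close> keeps \<open>\<psi>\<close> increasing.\<close>

lemma Hom_raise_below:
  assumes \<psi>: "\<psi> \<in> Hom m" and \<phi>: "\<phi> \<in> Hom m" and le: "\<forall>a\<in>{1..m}. \<psi> a \<le> \<phi> a"
    and "\<psi> \<noteq> \<phi>"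
  obtains b where "b \<in> {1..m}" "\<psi> b < \<phi> b" "\<psi>(b := Suc (\<psi> b)) \<in> Hom m"
proof -
  define S where "S = {a \<in> {1..m}. \<psi> a < \<phi> a}"
  have "S \<noteq> {}"
  proof
    assume "S = {}"
    then have "\<psi> a = \<phi> a" if "a \<in> {1..m}" for a
      using le that unfolding S_def by fastforce
    with Hom_eqI[OF \<psi> \<phi>] \<open>\<psi> \<noteq> \<phi>\<close> show False by blast
  qed
  moreover have "finite S" by (simp add: S_def)
  ultimately have b: "Max S \<in> S" and max: "\<And>a. a \<in> S \<Longrightarrow> a \<le> Max S"
    by simp_all
  let ?b = "Max S"
  have agree: "\<psi> a = \<phi> a" if "?b < a" "a \<le> m" for a
  proof -
    have "a \<in> {1..m}" using that b unfolding S_def by auto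
    moreover have "a \<notin> S" using max[of a] that(1) by auto
    ultimately show ?thesis using le unfolding S_def by fastforce
  qed
  have "\<psi>(?b := Suc (\<psi> ?b)) \<in> Hom m"
    unfolding Hom_def
  proof (intro CollectI conjI allI impI)
    fix x y assume xy: "1 \<le> x \<and> x \<le> y \<and> y \<le> m"
    show "(\<psi>(?b := Suc (\<psi> ?b))) x \<le> (\<psi>(?b := Suc (\<psi> ?b))) y"
    proof (cases "x = ?b \<and> y \<noteq> ?b")
      case True
      then have "\<psi> ?b < \<phi> ?b" "\<phi> ?b \<le> \<phi> y" "\<psi> y = \<phi> y"
        using b xy Hom_mono[OF \<phi>, of ?b y] agree[of y] unfolding S_def by auto
      with True show ?thesis by simp
    next
      case False
      with xy Hom_mono[OF \<psi>, of x y] show ?thesis by auto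
    qed
  next
    fix a assume "a \<notin> {1..m}"
    with b Hom_outside[OF \<psi>] show "(\<psi>(?b := Suc (\<psi> ?b))) a = 0" unfolding S_def by auto
  qed
  with b show ?thesis using that unfolding S_def by blast
qed

lemma strongly_stable_upward:
  assumes ss: "strongly_stable m (I :: 'k::comm_ring_1 mpoly set)" and \<phi>: "\<phi> \<in> Hom m"
  shows "\<psi> \<in> Hom m \<Longrightarrow> \<forall>a\<in>{1..m}. \<psi> a \<le> \<phi> a \<Longrightarrow> mono (hom_exp m \<psi>) \<in> I
    \<Longrightarrow> mono (hom_exp m \<phi>) \<in> I"
proof (induction \<psi> rule: measure_induct_rule[where f = "\<lambda>\<psi>. \<Sum>a\<in>{1..m}. \<phi> a - \<psi> a"])
  case (less \<psi>)
  show ?case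
  proof (cases "\<psi> = \<phi>")
    case False
    then obtain b where b: "b \<in> {1..m}" "\<psi> b < \<phi> b" and \<psi>': "\<psi>(b := Suc (\<psi> b)) \<in> Hom m"
      using Hom_raise_below[OF less.prems(1) \<phi> less.prems(2)] by blast
    have "(\<Sum>a\<in>{1..m}. \<phi> a - (\<psi>(b := Suc (\<psi> b))) a) < (\<Sum>a\<in>{1..m}. \<phi> a - \<psi> a)"
      using b less.prems(2) by (intro sum_strict_mono_ex1) auto
    moreover have "\<forall>a\<in>{1..m}. (\<psi>(b := Suc (\<psi> b))) a \<le> \<phi> a"
      using b less.prems(2) by simp
    ultimately show ?thesis
      using less.IH \<psi>' strongly_stable_raise[OF ss less.prems(1) b(1) \<psi>' less.prems(3)] by blast
  qed (use less.prems in simp)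
qed

definition poset_ideal_of :: "nat \<Rightarrow> ('k::comm_ring_1) mpoly set \<Rightarrow> (nat \<Rightarrow> nat) set" where
  "poset_ideal_of m I = {\<psi> \<in> Hom m. mono (hom_exp m \<psi>) \<notin> I}"

lemma poset_ideal_poset_ideal_of:
  assumes "strongly_stable m (I :: 'k::comm_ring_1 mpoly set)"
  shows "poset_ideal m (poset_ideal_of m I)"
  using strongly_stable_upward[OF assms] unfolding poset_ideal_def poset_ideal_of_def by blast

lemma Lp1_poset_ideal_of:
  assumes ss: "strongly_stable m (I :: 'k::comm_ring_1 mpoly set)"
  shows "Lp1 m (poset_ideal_of m I) = I"
proof (rule monomial_ideal_eqI[OF monomial_ideal_Lp1])
  show "monomial_ideal m I" using ss by (simp add: strongly_stable_def)
  fix v assume v: "v \<in> monoms m"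
  have "(mono v :: 'k mpoly) \<in> Lp1 m (poset_ideal_of m I) \<longleftrightarrow> partial_sums m v \<notin> poset_ideal_of m I"
    by (rule mono_in_Lp1_iff[OF poset_ideal_poset_ideal_of[OF ss] v])
  also have "\<dots> \<longleftrightarrow> mono v \<in> I"
    by (simp add: poset_ideal_of_def partial_sums_in_Hom hom_exp_partial_sums[OF v])
  finally show "(mono v :: 'k mpoly) \<in> Lp1 m (poset_ideal_of m I) \<longleftrightarrow> mono v \<in> I" .
qed

lemma poset_ideal_of_Lp1:
  assumes J: "poset_ideal m J"
  shows "poset_ideal_of m (Lp1 m J :: 'k::comm_ring_1 mpoly set) = J"
proof -
  have "\<psi> \<in> J \<longleftrightarrow> \<psi> \<in> Hom m \<and> (mono (hom_exp m \<psi>) :: 'k mpoly) \<notin> Lp1 m J" for \<psi>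
    using J mono_in_Lp1_iff[OF J hom_exp_in_monoms, where 'k='k] partial_sums_hom_exp[of \<psi> m]
    unfolding poset_ideal_def by auto
  then show ?thesis by (auto simp: poset_ideal_of_def)
qed

theorem theorem6p1:
  fixes m :: nat
  assumes "m \<ge> 1"
  shows "(\<forall>J. poset_ideal m J \<longrightarrow> strongly_stable m (Lp1 m J :: ('k::field) mpoly set))
    \<and> bij_betw (\<lambda>J. Lp1 m J :: 'k mpoly set) {J. poset_ideal m J} {I. strongly_stable m I}"
proof (intro conjI allI impI)
  show "poset_ideal m J \<Longrightarrow> strongly_stable m (Lp1 m J :: 'k mpoly set)" for J
    by (rule strongly_stable_Lp1)
  show "bij_betw (\<lambda>J. Lp1 m J :: 'k mpoly set) {J. poset_ideal m J} {I. strongly_stable m I}"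
    by (rule bij_betw_byWitness[where f' = "poset_ideal_of m"])
      (auto simp: poset_ideal_of_Lp1 Lp1_poset_ideal_of strongly_stable_Lp1 poset_ideal_poset_ideal_of)
qed

end
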